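(* Let $Q\in\mathbb{N}$ be the denominator $q_\ell$ of a convergent of an irrational number, and let $x_j=\frac{j+\varepsilon_j}{Q}$ for $0\le j\le Q-1$, where $0<\varepsilon_j<1$. Then $$\sum_{j=0}^{Q-1}\log(x_j)-Q\int_0^1\log(x)\,dx=\sum_{j=1}^{Q-1}\frac{\varepsilon_j-1/2}{j}+\log(\varepsilon_0)+O(1),$$ with an absolute implied constant independent of the $\varepsilon_j$ and of $Q$. *)

theory Defs
  imports "HOL-Analysis.Analysis"
begin

fun cf_rem :: "real \<Rightarrow> nat \<Rightarrow> real" where
  "cf_rem x 0 = x"
| "cf_rem x (Suc n) = 1 / frac (cf_rem x n)"

definition cf_a :: "real \<Rightarrow> nat \<Rightarrow> int" where
  "cf_a x n = \<lfloor>cf_rem x n\<rfloor>"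

fun cf_q :: "real \<Rightarrow> nat \<Rightarrow> int" where
  "cf_q x 0 = 1"
| "cf_q x (Suc 0) = cf_a x 1"
| "cf_q x (Suc (Suc n)) = cf_a x (Suc (Suc n)) * cf_q x (Suc n) + cf_q x n"

definition is_convergent_denom :: "nat \<Rightarrow> bool" where
  "is_convergent_denom Q \<longleftrightarrow> (\<exists>\<alpha>::real. \<exists>l. \<alpha> \<notin> \<rat> \<and> int Q = cf_q \<alpha> l)"

end

theory Submission
  imports Defs "HOL-Real_Asymp.Real_Asymp"
begin

text \<open>Since \<open>Q \<integral>\<^sub>0\<^sup>1 ln = -Q\<close>, the left-hand side is \<open>ln \<epsilon>\<^sub>0\<close> plus the sum of
  \<open>ln (j + \<epsilon>\<^sub>j)\<close> over \<open>1 \<le> j < Q\<close>, minus \<open>Q ln Q - Q\<close>. Replacing \<open>ln (j + \<epsilon>\<^sub>j)\<close> by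
  \<open>ln j + \<epsilon>\<^sub>j / j\<close> costs at most \<open>1 / j\<^sup>2\<close> per term. What remains, the sum of \<open>ln j + 1 / (2 j)\<close>
  over \<open>1 \<le> j < Q\<close> minus \<open>Q ln Q - Q\<close>, is a Stirling-type quantity whose increments
  \<open>1 + 1 / (2 n) - (n + 1) ln (1 + 1 / n)\<close> are \<open>O(1 / n\<^sup>2)\<close> by the second-order expansion of
  \<open>ln (1 + t)\<close>. As \<open>\<Sum> 1 / n\<^sup>2\<close> converges, everything is bounded independently of \<open>Q\<close> and
  the \<open>\<epsilon>\<^sub>j\<close>; of the convergent-denominator hypothesis only \<open>Q \<ge> 1\<close> is needed.\<close>

lemma ln_add_one_ge_quadratic:
  fixes t :: real
  assumes "0 \<le> t"
  shows "t - t\<^sup>2 / 2 \<le> ln (1 + t)"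
proof -
  let ?h = "\<lambda>t::real. ln (1 + t) - (t - t\<^sup>2 / 2)"
  have "?h 0 \<le> ?h t"
  proof (rule DERIV_nonneg_imp_nondecreasing[OF assms])
    fix x :: real
    assume "0 \<le> x"
    then show "\<exists>y. DERIV ?h x :> y \<and> 0 \<le> y"
      by (intro exI[of _ "1 / (1 + x) - (1 - x)"])
        (auto intro!: derivative_eq_intros simp: field_simps power2_eq_square)
  qed
  then show ?thesis by simp
qed

lemma ln_add_one_le_cubic:
  fixes t :: real
  assumes "0 \<le> t"
  shows "ln (1 + t) \<le> t - t\<^sup>2 / 2 + t ^ 3 / 3"
proof -
  let ?h = "\<lambda>t::real. (t - t\<^sup>2 / 2 + t ^ 3 / 3) - ln (1 + t)"
  have "?h 0 \<le> ?h t"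
  proof (rule DERIV_nonneg_imp_nondecreasing[OF assms])
    fix x :: real
    assume "0 \<le> x"
    then show "\<exists>y. DERIV ?h x :> y \<and> 0 \<le> y"
      by (intro exI[of _ "(1 - x + x\<^sup>2) - 1 / (1 + x)"])
        (auto intro!: derivative_eq_intros simp: field_simps power2_eq_square power3_eq_cube)
  qed
  then show ?thesis by simp
qed

lemma abs_ln_add_minus_linear_le:
  fixes x e :: real
  assumes "0 < x" "0 \<le> e" "e \<le> x"
  shows "\<bar>ln (x + e) - ln x - e / x\<bar> \<le> (e / x)\<^sup>2"
proof -
  have "x + e = x * (1 + e / x)"
    using assms by (simp add: field_simps)
  moreover have "0 < 1 + e / x"
    using assms by (simp add: add_pos_nonneg)
  ultimately have "ln (x + e) = ln x + ln (1 + e / x)"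
    using assms by (simp add: ln_mult_pos)
  then show ?thesis
    using abs_ln_one_plus_x_minus_x_bound_nonneg[of "e / x"] assms by simp
qed

lemma abs_stirling_increment_le:
  fixes x :: real
  assumes "1 \<le> x"
  shows "\<bar>1 + 1 / (2 * x) - (x + 1) * ln (1 + 1 / x)\<bar> \<le> 1 / x\<^sup>2"
proof -
  define t where "t = 1 / x"
  have t: "0 < t" "t \<le> 1"
    using assms by (auto simp: t_def)
  have x: "x = 1 / t"
    using assms by (simp add: t_def)
  have "(1 / t + 1) * (t - t\<^sup>2 / 2) \<le> (1 / t + 1) * ln (1 + t)"
    using t ln_add_one_ge_quadratic[of t] by (intro mult_left_mono) auto
  moreover have "(1 / t + 1) * ln (1 + t) \<le> (1 / t + 1) * (t - t\<^sup>2 / 2 + t ^ 3 / 3)"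
    using t ln_add_one_le_cubic[of t] by (intro mult_left_mono) auto
  moreover have "(1 / t + 1) * (t - t\<^sup>2 / 2) = 1 + t / 2 - t\<^sup>2 / 2"
    using t by (simp add: field_simps power2_eq_square)
  moreover have "(1 / t + 1) * (t - t\<^sup>2 / 2 + t ^ 3 / 3) = 1 + t / 2 - t\<^sup>2 / 6 + t ^ 3 / 3"
    using t by (simp add: field_simps power2_eq_square power3_eq_cube)
  moreover have "t ^ 3 \<le> t\<^sup>2"
    using t by (simp add: power_decreasing)
  ultimately have "\<bar>1 + t / 2 - (1 / t + 1) * ln (1 + t)\<bar> \<le> t\<^sup>2"
    using t by (auto simp: abs_le_iff)
  then show ?thesis
    unfolding x by (simp add: t_def field_simps)
qed

lemma sum_inverse_squares_le: "(\<Sum>j=1..m. 1 / (real j)\<^sup>2) \<le> pi\<^sup>2 / 6"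
proof -
  have "(\<Sum>j=1..m. 1 / (real j)\<^sup>2) = (\<Sum>n<m. 1 / (1 + real n)\<^sup>2)"
    by (rule sum.reindex_bij_witness[of _ Suc "\<lambda>j. j - 1"]) auto
  also have "\<dots> \<le> (\<Sum>n. 1 / (1 + real n)\<^sup>2)"
    using inverse_squares_sums by (intro sum_le_suminf) (auto simp: sums_iff)
  also have "\<dots> = pi\<^sup>2 / 6"
    using inverse_squares_sums by (simp add: sums_iff)
  finally show ?thesis .
qed

lemma integral_ln_unit_interval: "integral {0..1} ln = (-1 :: real)"
proof -
  define F where "F x = x * ln x - x" for x :: real
  have "continuous (at x within {0..1}) F" if "x \<in> {0..1}" for x
  proof (cases "x = 0")
    case True
    have "(F \<longlongrightarrow> 0) (at_right 0)"
      unfolding F_def by real_asymp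
    then show ?thesis
      using True by (simp add: continuous_within at_within_Icc_at_right F_def)
  next
    case False
    with that have "continuous (at x) F"
      unfolding F_def by (auto intro!: continuous_intros)
    then show ?thesis
      by (rule continuous_at_imp_continuous_within)
  qed
  then have "continuous_on {0..1} F"
    by (simp add: continuous_on_eq_continuous_within)
  moreover have "(F has_vector_derivative ln x) (at x)" if "x \<in> {0<..<1}" for x
    using that unfolding F_def has_real_derivative_iff_has_vector_derivative[symmetric]
    by (auto intro!: derivative_eq_intros)
  ultimately have "(ln has_integral (F 1 - F 0)) {0..1}"
    by (intro fundamental_theorem_of_calculus_interior_strong[of "{}"]) auto
  then show ?thesis
    by (simp add: F_def integral_unique)
qed

lemma cf_rem_not_Rats: "x \<notin> \<rat> \<Longrightarrow> cf_rem x n \<notin> \<rat>"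
proof (induction n)
  case (Suc n)
  then have "frac (cf_rem x n) \<notin> \<rat>"
    using frac_in_Rats_iff by blast
  then show ?case
    by (simp add: Rats_inverse_iff[symmetric, of "frac (cf_rem x n)"] divide_inverse)
qed simp

lemma cf_a_Suc_pos:
  assumes "x \<notin> \<rat>"
  shows "1 \<le> cf_a x (Suc n)"
proof -
  have "frac (cf_rem x n) \<notin> \<rat>"
    using cf_rem_not_Rats[OF assms] frac_in_Rats_iff by blast
  then have "frac (cf_rem x n) \<noteq> 0"
    by (metis Rats_0)
  then have "0 < frac (cf_rem x n)" "frac (cf_rem x n) < 1"
    using frac_ge_0[of "cf_rem x n"] frac_lt_1 by auto
  then show ?thesis
    by (simp add: cf_a_def)
qed

lemma cf_q_pos:
  assumes "x \<notin> \<rat>"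
  shows "1 \<le> cf_q x n"
proof -
  have "1 \<le> cf_q x n \<and> 1 \<le> cf_q x (Suc n)"
  proof (induction n)
    case 0
    then show ?case
      using cf_a_Suc_pos[OF assms, of 0] by simp
  next
    case (Suc n)
    then have "1 * 1 \<le> cf_a x (Suc (Suc n)) * cf_q x (Suc n)"
      using cf_a_Suc_pos[OF assms, of "Suc n"] by (intro mult_mono) auto
    with Suc show ?case
      by simp
  qed
  then show ?thesis ..
qed

lemma is_convergent_denom_pos:
  assumes "is_convergent_denom Q"
  shows "0 < Q"
proof -
  obtain \<alpha> l where "\<alpha> \<notin> \<rat>" "int Q = cf_q \<alpha> l"
    using assms unfolding is_convergent_denom_def by blast
  then have "1 \<le> int Q"
    using cf_q_pos by metis
  then show ?thesis
    by simp
qed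

definition stirling_defect :: "nat \<Rightarrow> real" where
  "stirling_defect m =
     (\<Sum>j=1..m. ln (real j) + 1 / (2 * real j)) - (real m + 1) * ln (real m + 1) + (real m + 1)"

lemma abs_stirling_defect_minus_one_le:
  "\<bar>stirling_defect m - 1\<bar> \<le> (\<Sum>j=1..m. 1 / (real j)\<^sup>2)"
proof (induction m)
  case (Suc m)
  let ?n = "real (Suc m)"
  have "ln (?n * (1 + 1 / ?n)) = ln ?n + ln (1 + 1 / ?n)"
    by (rule ln_mult_pos) (simp_all add: add_pos_pos del: of_nat_Suc)
  then have ln_step: "ln (?n + 1) = ln ?n + ln (1 + 1 / ?n)"
    by (simp add: distrib_left del: of_nat_Suc)
  have m_plus_one: "real m + 1 = ?n"
    by simp
  have "stirling_defect (Suc m)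
      = stirling_defect m + (1 + 1 / (2 * ?n) - (?n + 1) * ln (1 + 1 / ?n))"
    unfolding stirling_defect_def m_plus_one ln_step by (simp add: algebra_simps del: of_nat_Suc)
  moreover have "\<bar>1 + 1 / (2 * ?n) - (?n + 1) * ln (1 + 1 / ?n)\<bar> \<le> 1 / ?n\<^sup>2"
    by (rule abs_stirling_increment_le) simp
  ultimately show ?case
    using Suc.IH by simp
qed (simp add: stirling_defect_def)

lemma abs_sum_ln_add_minus_linear_le:
  fixes \<epsilon> :: "nat \<Rightarrow> real"
  assumes "\<forall>j\<in>{1..n}. 0 \<le> \<epsilon> j \<and> \<epsilon> j \<le> 1"
  shows "\<bar>\<Sum>j=1..n. ln (real j + \<epsilon> j) - ln (real j) - \<epsilon> j / real j\<bar> \<le> pi\<^sup>2 / 6"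
proof (rule order_trans[OF order_trans[OF sum_abs sum_mono] sum_inverse_squares_le])
  fix j
  assume "j \<in> {1..n}"
  with assms have j: "1 \<le> j" "0 \<le> \<epsilon> j" "\<epsilon> j \<le> 1"
    by auto
  then have "\<bar>ln (real j + \<epsilon> j) - ln (real j) - \<epsilon> j / real j\<bar> \<le> (\<epsilon> j / real j)\<^sup>2"
    by (intro abs_ln_add_minus_linear_le) auto
  also have "\<dots> \<le> (1 / real j)\<^sup>2"
    using j by (intro power_mono divide_right_mono) auto
  finally show "\<bar>ln (real j + \<epsilon> j) - ln (real j) - \<epsilon> j / real j\<bar> \<le> 1 / (real j)\<^sup>2"
    by (simp add: power_one_over)
qed

lemma sum_ln_shifted_grid_decomposition:
  fixes \<epsilon> :: "nat \<Rightarrow> real"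
  assumes "0 < Q" "\<forall>j<Q. 0 < \<epsilon> j"
  shows "(\<Sum>j<Q. ln ((real j + \<epsilon> j) / real Q)) - real Q * integral {0..1} ln
      - ((\<Sum>j=1..Q-1. (\<epsilon> j - 1/2) / real j) + ln (\<epsilon> 0))
    = (\<Sum>j=1..Q-1. ln (real j + \<epsilon> j) - ln (real j) - \<epsilon> j / real j) + stirling_defect (Q - 1)"
proof -
  obtain m where Q: "Q = Suc m"
    using assms(1) gr0_implies_Suc by blast
  have "(\<Sum>j<Q. ln ((real j + \<epsilon> j) / real Q)) = (\<Sum>j<Q. ln (real j + \<epsilon> j) - ln (real Q))"
    using assms by (intro sum.cong) (auto simp: ln_div add_nonneg_pos)
  also have "\<dots> = ln (\<epsilon> 0) + (\<Sum>j=1..m. ln (real j + \<epsilon> j)) - real (Suc m) * ln (real (Suc m))"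
    unfolding Q
    by (simp add: sum_subtractf lessThan_Suc_atMost atMost_atLeast0 sum.atLeast_Suc_atMost
        del: of_nat_Suc)
  finally show ?thesis
    unfolding Q integral_ln_unit_interval
    by (simp add: stirling_defect_def sum.distrib sum_subtractf diff_divide_distrib algebra_simps)
qed

theorem proposition4p1:
  shows "\<exists>C::real. \<forall>(Q::nat) (\<epsilon>::nat \<Rightarrow> real).
           is_convergent_denom Q \<longrightarrow> (\<forall>j<Q. 0 < \<epsilon> j \<and> \<epsilon> j < 1) \<longrightarrow>
           \<bar>(\<Sum>j<Q. ln ((real j + \<epsilon> j) / real Q)) - real Q * integral {0..1} ln
             - ((\<Sum>j=1..Q-1. (\<epsilon> j - 1/2) / real j) + ln (\<epsilon> 0))\<bar> \<le> C"
proof (intro exI[of _ "1 + pi\<^sup>2 / 3"] allI impI)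
  fix Q :: nat and \<epsilon> :: "nat \<Rightarrow> real"
  assume "is_convergent_denom Q" and \<epsilon>: "\<forall>j<Q. 0 < \<epsilon> j \<and> \<epsilon> j < 1"
  from \<open>is_convergent_denom Q\<close> have "0 < Q"
    by (rule is_convergent_denom_pos)
  with \<epsilon> have decomposition:
    "(\<Sum>j<Q. ln ((real j + \<epsilon> j) / real Q)) - real Q * integral {0..1} ln
      - ((\<Sum>j=1..Q-1. (\<epsilon> j - 1/2) / real j) + ln (\<epsilon> 0))
    = (\<Sum>j=1..Q-1. ln (real j + \<epsilon> j) - ln (real j) - \<epsilon> j / real j) + stirling_defect (Q - 1)"
    (is "?lhs = ?err + _")
    by (intro sum_ln_shifted_grid_decomposition) auto
  have "0 \<le> \<epsilon> j \<and> \<epsilon> j \<le> 1" if "j \<in> {1..Q-1}" for j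
  proof -
    from that have "j < Q"
      by auto
    with \<epsilon> show ?thesis
      by (simp add: less_imp_le)
  qed
  then have "\<bar>?err\<bar> \<le> pi\<^sup>2 / 6"
    by (intro abs_sum_ln_add_minus_linear_le) blast
  moreover have "\<bar>stirling_defect (Q - 1)\<bar> \<le> 1 + pi\<^sup>2 / 6"
    using abs_stirling_defect_minus_one_le[of "Q - 1"] sum_inverse_squares_le[of "Q - 1"] by linarith
  ultimately show "\<bar>?lhs\<bar> \<le> 1 + pi\<^sup>2 / 3"
    unfolding decomposition by linarith
qed

end
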